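(* Let $\mathcal F$ be a proper filter on $\omega$ and consider the game $\mathfrak G(\mathcal F,\omega,\mathcal F)$. Then (1) player I has a winning strategy if and only if $\mathcal F$ is not Ramsey; (2) player II never has a winning strategy.
   Context: A filter on $\omega$ is a family $\mathcal F\subseteq\mathcal P(\omega)$ closed under finite intersections and supersets and containing all cofinite sets; it is proper if all its members are infinite. Game $\mathfrak G(\mathcal X,\omega,\mathcal Z)$: at each stage $k\in\omega$, player I chooses $X_k\in\mathcal X$ and player II responds with $n_k\in X_k$; II wins if $\{n_k:k\in\omega\}\in\mathcal Z$, otherwise I wins. A tree is a set $T$ of finite sequences of natural numbers containing the empty sequence and closed under initial segments; for $\mathcal X\subseteq\mathcal P(\omega)$ it is an $\mathcal X$-tree if for each $\bar s\in T$ there is $X_{\bar s}\in\mathcal X$ with $\bar s^\frown n\in T$ for all $n\in X_{\bar s}$. A branch is an infinite sequence all of whose finite initial segments lie in $T$; a branch is "in" a family if its set of values belongs to that family. $\mathcal F$ is Ramsey if every $\mathcal F$-tree has a branch in $\mathcal F$ (equivalently, $\mathcal F$ is both a Q-filter and a P-filter, where a Q-filter is one such that for every partition of $\omega$ into finite sets $s_k$ there is $X\in\mathcal F$ with $|X\cap s_k|\le 1$ for all $k$, and a P-filter is one such that every countable subfamily $\{X_n\}$ has some $X\in\mathcal F$ with $X\setminus X_n$ finite for all $n$). *)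

theory Defs
  imports Main
begin

definition is_filter :: "nat set set \<Rightarrow> bool" where
  "is_filter F \<longleftrightarrow>
     (\<forall>A\<in>F. \<forall>B\<in>F. A \<inter> B \<in> F) \<and>
     (\<forall>A\<in>F. \<forall>B. A \<subseteq> B \<longrightarrow> B \<in> F) \<and>
     (\<forall>A. finite (UNIV - A) \<longrightarrow> A \<in> F)"

definition proper_filter :: "nat set set \<Rightarrow> bool" where
  "proper_filter F \<longleftrightarrow> is_filter F \<and> (\<forall>A\<in>F. infinite A)"

text \<open>Finite sequences are lists; the k-th initial segment of an infinite sequence f
  is map f [0..<k].\<close>
definition is_tree :: "nat list set \<Rightarrow> bool" where
  "is_tree T \<longleftrightarrow> [] \<in> T \<and> (\<forall>s\<in>T. \<forall>k. take k s \<in> T)"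

definition is_X_tree :: "nat set set \<Rightarrow> nat list set \<Rightarrow> bool" where
  "is_X_tree X T \<longleftrightarrow> is_tree T \<and>
     (\<forall>s\<in>T. \<exists>Y\<in>X. \<forall>n\<in>Y. s @ [n] \<in> T)"

definition is_branch :: "nat list set \<Rightarrow> (nat \<Rightarrow> nat) \<Rightarrow> bool" where
  "is_branch T f \<longleftrightarrow> (\<forall>k. map f [0..<k] \<in> T)"

definition ramsey :: "nat set set \<Rightarrow> bool" where
  "ramsey F \<longleftrightarrow> (\<forall>T. is_X_tree F T \<longrightarrow> (\<exists>f. is_branch T f \<and> range f \<in> F))"

text \<open>A strategy for player I maps the finite sequence of
  II's previous moves to I's next move (I's own previous moves are determined by it).\<close>
definition I_winning_strategy :: "nat set set \<Rightarrow> nat set set \<Rightarrow> (nat list \<Rightarrow> nat set) \<Rightarrow> bool" where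
  "I_winning_strategy X Z \<sigma> \<longleftrightarrow>
     (\<forall>s. \<sigma> s \<in> X) \<and>
     (\<forall>f. (\<forall>k. f k \<in> \<sigma> (map f [0..<k])) \<longrightarrow> range f \<notin> Z)"

definition I_has_winning_strategy :: "nat set set \<Rightarrow> nat set set \<Rightarrow> bool" where
  "I_has_winning_strategy X Z \<longleftrightarrow> (\<exists>\<sigma>. I_winning_strategy X Z \<sigma>)"

text \<open>A strategy for player II maps the (nonempty) sequence of I's moves so far
  X_0, ..., X_k to II's response n_k \<in> X_k.\<close>
definition II_winning_strategy :: "nat set set \<Rightarrow> nat set set \<Rightarrow> (nat set list \<Rightarrow> nat) \<Rightarrow> bool" where
  "II_winning_strategy X Z \<tau> \<longleftrightarrow>
     (\<forall>Ys Y. set Ys \<subseteq> X \<and> Y \<in> X \<longrightarrow> \<tau> (Ys @ [Y]) \<in> Y) \<and>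
     (\<forall>g. (\<forall>k. g k \<in> X) \<longrightarrow> range (\<lambda>k. \<tau> (map g [0..<Suc k])) \<in> Z)"

definition II_has_winning_strategy :: "nat set set \<Rightarrow> nat set set \<Rightarrow> bool" where
  "II_has_winning_strategy X Z \<longleftrightarrow> (\<exists>\<tau>. II_winning_strategy X Z \<tau>)"

end

theory Submission
  imports Defs
begin

text \<open>A strategy for player I is essentially an \<open>\<F>\<close>-tree: the positions consistent with it form
  an \<open>\<F>\<close>-tree whose branches are exactly its plays, and conversely I can play along any
  \<open>\<F>\<close>-tree. So I wins iff some \<open>\<F>\<close>-tree has no branch in \<open>\<F>\<close>, i.e. iff \<open>\<F>\<close> is not Ramsey; this needs no
  property of \<open>\<F>\<close> at all.

  Against a strategy \<open>\<tau>\<close> of player II, player I plays two games at once, moving alternately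
  in each and always choosing the complement of the finitely many numbers \<open>\<tau>\<close> has answered
  so far in either game. These cofinite moves are legal, and they make the two sets of
  answers disjoint; if \<open>\<tau>\<close> were winning both would lie in the proper filter \<open>\<F>\<close>.\<close>

definition plays_tree :: "(nat list \<Rightarrow> nat set) \<Rightarrow> nat list set" where
  "plays_tree \<sigma> = {s. \<forall>k<length s. s ! k \<in> \<sigma> (take k s)}"

lemma is_X_tree_plays_tree:
  assumes "\<And>s. \<sigma> s \<in> X"
  shows "is_X_tree X (plays_tree \<sigma>)"
  unfolding is_X_tree_def is_tree_def
proof (intro conjI ballI allI)
  show "[] \<in> plays_tree \<sigma>"
    unfolding plays_tree_def by simp
next
  fix s k
  assume "s \<in> plays_tree \<sigma>"
  then show "take k s \<in> plays_tree \<sigma>"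
    unfolding plays_tree_def by auto
next
  fix s
  assume s: "s \<in> plays_tree \<sigma>"
  have "s @ [n] \<in> plays_tree \<sigma>" if "n \<in> \<sigma> s" for n
    using s that unfolding plays_tree_def by (auto simp: nth_append less_Suc_eq)
  then show "\<exists>Y\<in>X. \<forall>n\<in>Y. s @ [n] \<in> plays_tree \<sigma>"
    using assms by blast
qed

lemma is_branch_plays_tree_iff:
  "is_branch (plays_tree \<sigma>) f \<longleftrightarrow> (\<forall>k. f k \<in> \<sigma> (map f [0..<k]))"
proof
  assume branch: "is_branch (plays_tree \<sigma>) f"
  show "\<forall>k. f k \<in> \<sigma> (map f [0..<k])"
  proof
    fix k
    have "map f [0..<Suc k] \<in> plays_tree \<sigma>"
      using branch unfolding is_branch_def by blast
    then show "f k \<in> \<sigma> (map f [0..<k])"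
      unfolding plays_tree_def by (simp del: upt_Suc add: take_map)
  qed
next
  assume "\<forall>k. f k \<in> \<sigma> (map f [0..<k])"
  then show "is_branch (plays_tree \<sigma>) f"
    unfolding is_branch_def plays_tree_def by (simp add: take_map)
qed

lemma I_has_winning_strategy_if_X_tree:
  assumes tree: "is_X_tree X T" and no_branch: "\<And>f. is_branch T f \<Longrightarrow> range f \<notin> Z"
  shows "I_has_winning_strategy X Z"
proof -
  define \<sigma> where "\<sigma> s = (SOME Y. Y \<in> X \<and> (s \<in> T \<longrightarrow> (\<forall>n\<in>Y. s @ [n] \<in> T)))" for s
  have "\<exists>Y. Y \<in> X \<and> (s \<in> T \<longrightarrow> (\<forall>n\<in>Y. s @ [n] \<in> T))" for s
  proof (cases "s \<in> T")
    case True
    then show ?thesis using tree unfolding is_X_tree_def by blast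
  next
    case False
    have "[] \<in> T" using tree unfolding is_X_tree_def is_tree_def by blast
    then show ?thesis using tree unfolding is_X_tree_def by blast
  qed
  then have "\<sigma> s \<in> X \<and> (s \<in> T \<longrightarrow> (\<forall>n\<in>\<sigma> s. s @ [n] \<in> T))" for s
    unfolding \<sigma>_def by (rule someI_ex)
  then have \<sigma>: "\<sigma> s \<in> X" "s \<in> T \<Longrightarrow> n \<in> \<sigma> s \<Longrightarrow> s @ [n] \<in> T" for s n
    by blast+
  have "range f \<notin> Z" if play: "\<forall>k. f k \<in> \<sigma> (map f [0..<k])" for f
  proof -
    have "map f [0..<k] \<in> T" for k
    proof (induction k)
      case 0
      then show ?case using tree unfolding is_X_tree_def is_tree_def by simp
    next
      case (Suc k)
      then show ?case using \<sigma>(2) play by simp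
    qed
    then show ?thesis
      using no_branch unfolding is_branch_def by blast
  qed
  with \<sigma>(1) show ?thesis
    unfolding I_has_winning_strategy_def I_winning_strategy_def by blast
qed

lemma I_has_winning_strategy_iff_X_tree:
  "I_has_winning_strategy X Z \<longleftrightarrow> (\<exists>T. is_X_tree X T \<and> (\<forall>f. is_branch T f \<longrightarrow> range f \<notin> Z))"
proof
  assume "I_has_winning_strategy X Z"
  then obtain \<sigma> where "I_winning_strategy X Z \<sigma>"
    unfolding I_has_winning_strategy_def by blast
  then show "\<exists>T. is_X_tree X T \<and> (\<forall>f. is_branch T f \<longrightarrow> range f \<notin> Z)"
    unfolding I_winning_strategy_def
    by (metis is_X_tree_plays_tree is_branch_plays_tree_iff)
next
  assume "\<exists>T. is_X_tree X T \<and> (\<forall>f. is_branch T f \<longrightarrow> range f \<notin> Z)"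
  then show "I_has_winning_strategy X Z"
    using I_has_winning_strategy_if_X_tree by blast
qed

corollary I_has_winning_strategy_iff_not_ramsey:
  "I_has_winning_strategy F F \<longleftrightarrow> \<not> ramsey F"
  unfolding ramsey_def I_has_winning_strategy_iff_X_tree by blast

definition II_answers :: "(nat set list \<Rightarrow> nat) \<Rightarrow> nat set list \<Rightarrow> nat set" where
  "II_answers \<tau> Ys = (\<lambda>j. \<tau> (take (Suc j) Ys)) ` {..<length Ys}"

lemma II_answers_map:
  "II_answers \<tau> (map g [0..<k]) = (\<lambda>j. \<tau> (map g [0..<Suc j])) ` {..<k}"
  unfolding II_answers_def by (auto simp: take_map min_def)

primrec double_play :: "(nat set list \<Rightarrow> nat) \<Rightarrow> nat \<Rightarrow> nat set list \<times> nat set list" where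
  "double_play \<tau> 0 = ([], [])"
| "double_play \<tau> (Suc n) =
     (let (Ys, Zs) = double_play \<tau> n;
          Ys' = Ys @ [- (II_answers \<tau> Ys \<union> II_answers \<tau> Zs)]
      in (Ys', Zs @ [- (II_answers \<tau> Ys' \<union> II_answers \<tau> Zs)]))"

lemma double_play_sequences:
  obtains g h :: "nat \<Rightarrow> nat set" where
    "\<And>k. g k = - ((\<lambda>j. \<tau> (map g [0..<Suc j])) ` {..<k} \<union> (\<lambda>j. \<tau> (map h [0..<Suc j])) ` {..<k})"
    "\<And>k. h k = - ((\<lambda>j. \<tau> (map g [0..<Suc j])) ` {..k} \<union> (\<lambda>j. \<tau> (map h [0..<Suc j])) ` {..<k})"
proof -
  define g where "g k = last (fst (double_play \<tau> (Suc k)))" for k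
  define h where "h k = last (snd (double_play \<tau> (Suc k)))" for k
  have prefixes: "double_play \<tau> n = (map g [0..<n], map h [0..<n])" for n
  proof (induction n)
    case 0
    then show ?case by simp
  next
    case (Suc n)
    then show ?case
      unfolding g_def h_def by (simp add: Let_def)
  qed
  have g_step: "g k = - (II_answers \<tau> (map g [0..<k]) \<union> II_answers \<tau> (map h [0..<k]))" for k
    using prefixes[of "Suc k"] by (simp add: prefixes[of k] Let_def)
  have "h k = - (II_answers \<tau> (map g [0..<Suc k]) \<union> II_answers \<tau> (map h [0..<k]))" for k
    using prefixes[of "Suc k"] g_step[of k] by (simp add: prefixes[of k] Let_def)
  with g_step show ?thesis
    using that unfolding II_answers_map lessThan_Suc_atMost by blast
qed

lemma not_II_has_winning_strategy:
  assumes cofinite: "\<And>A. finite A \<Longrightarrow> - A \<in> X"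
    and intersecting: "\<And>A B. A \<in> Z \<Longrightarrow> B \<in> Z \<Longrightarrow> A \<inter> B \<noteq> {}"
  shows "\<not> II_has_winning_strategy X Z"
proof
  assume "II_has_winning_strategy X Z"
  then obtain \<tau> where legal: "\<And>Ys Y. set Ys \<subseteq> X \<Longrightarrow> Y \<in> X \<Longrightarrow> \<tau> (Ys @ [Y]) \<in> Y"
    and wins: "\<And>g. (\<And>k. g k \<in> X) \<Longrightarrow> range (\<lambda>k. \<tau> (map g [0..<Suc k])) \<in> Z"
    unfolding II_has_winning_strategy_def II_winning_strategy_def by blast
  obtain g h where
    g: "\<And>k. g k = - ((\<lambda>j. \<tau> (map g [0..<Suc j])) ` {..<k} \<union> (\<lambda>j. \<tau> (map h [0..<Suc j])) ` {..<k})" and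
    h: "\<And>k. h k = - ((\<lambda>j. \<tau> (map g [0..<Suc j])) ` {..k} \<union> (\<lambda>j. \<tau> (map h [0..<Suc j])) ` {..<k})"
    using double_play_sequences[where \<tau> = \<tau>] by blast
  define a where "a = (\<lambda>k. \<tau> (map g [0..<Suc k]))"
  define b where "b = (\<lambda>k. \<tau> (map h [0..<Suc k]))"
  have g_ab: "g k = - (a ` {..<k} \<union> b ` {..<k})" and h_ab: "h k = - (a ` {..k} \<union> b ` {..<k})" for k
    unfolding a_def b_def by (fact g h)+
  have gX: "g k \<in> X" and hX: "h k \<in> X" for k
    unfolding g_ab h_ab by (rule cofinite, simp)+
  have "a k \<in> g k" and "b k \<in> h k" for k
    unfolding a_def b_def using legal[of "map g [0..<k]" "g k"] legal[of "map h [0..<k]" "h k"] gX hX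
    by auto
  then have a: "a k \<notin> b ` {..<k}" and b: "b k \<notin> a ` {..k}" for k
    using g_ab[of k] h_ab[of k] by blast+
  have "a k \<noteq> b j" for k j
    using a[of k] b[of j] by (metis atMost_iff image_eqI lessThan_iff not_le)
  then have "range a \<inter> range b = {}"
    by auto
  moreover have "range a \<in> Z" and "range b \<in> Z"
    unfolding a_def b_def using wins gX hX by blast+
  ultimately show False
    using intersecting by blast
qed

lemma proper_filter_intersecting:
  assumes "proper_filter F" "A \<in> F" "B \<in> F"
  shows "A \<inter> B \<noteq> {}"
proof -
  have "A \<inter> B \<in> F"
    using assms unfolding proper_filter_def is_filter_def by blast
  then have "infinite (A \<inter> B)"
    using assms(1) unfolding proper_filter_def by blast
  then show ?thesis
    by auto
qed

lemma filter_Compl_finite: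
  assumes "is_filter F" "finite A"
  shows "- A \<in> F"
proof -
  have "finite (UNIV - - A)"
    using assms(2) by simp
  then show ?thesis
    using assms(1) unfolding is_filter_def by blast
qed

theorem theorem2p6:
  fixes F :: "nat set set"
  assumes "proper_filter F"
  shows "(I_has_winning_strategy F F \<longleftrightarrow> \<not> ramsey F) \<and> \<not> II_has_winning_strategy F F"
proof
  show "I_has_winning_strategy F F \<longleftrightarrow> \<not> ramsey F"
    by (rule I_has_winning_strategy_iff_not_ramsey)
  have "is_filter F"
    using assms unfolding proper_filter_def by blast
  then show "\<not> II_has_winning_strategy F F"
    by (intro not_II_has_winning_strategy filter_Compl_finite proper_filter_intersecting[OF assms])
qed

end
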